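(* Let $M \ge 2$ be an integer and let $\alpha \in (0,1]$ satisfy $2\lceil 1/\alpha\rceil \le M$ (equivalently, the feasible set below is nonempty). Consider the optimization problem $$\text{maximize } \Bigl(-\sum_{i=1}^M s_i\log s_i + \sum_{i=1}^M t_i \log t_i\Bigr)$$ over $(s_1,t_1,\ldots,s_M,t_M)\in\mathbb{R}^{2M}$ subject to $s_i,t_i\ge 0$, $s_i+t_i\le\alpha$, $s_i t_i = 0$ for all $i\in\{1,\ldots,M\}$, and $\sum_{i=1}^M s_i = \sum_{i=1}^M t_i = 1$. Then the maximum is attained and equals $$g(\alpha) = \log\Bigl(M - \Bigl\lceil \frac1\alpha\Bigr\rceil\Bigr) + \alpha\Bigl\lfloor\frac1\alpha\Bigr\rfloor\log\alpha + \Bigl(1-\alpha\Bigl\lfloor\frac1\alpha\Bigr\rfloor\Bigr)\log\Bigl(1-\alpha\Bigl\lfloor\frac1\alpha\Bigr\rfloor\Bigr).$$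
   Context: Logarithms are natural, with the convention $0\log 0 = 0$. *)

theory Defs
  imports "HOL-Analysis.Analysis"
begin

definition xlogx :: "real \<Rightarrow> real" where
  "xlogx x = (if x = 0 then 0 else x * ln x)"

definition feasible :: "nat \<Rightarrow> real \<Rightarrow> (nat \<Rightarrow> real) \<Rightarrow> (nat \<Rightarrow> real) \<Rightarrow> bool" where
  "feasible M \<alpha> s t \<longleftrightarrow>
     (\<forall>i\<in>{1..M}. s i \<ge> 0 \<and> t i \<ge> 0 \<and> s i + t i \<le> \<alpha> \<and> s i * t i = 0) \<and>
     (\<Sum>i=1..M. s i) = 1 \<and> (\<Sum>i=1..M. t i) = 1"

definition objective :: "nat \<Rightarrow> (nat \<Rightarrow> real) \<Rightarrow> (nat \<Rightarrow> real) \<Rightarrow> real" where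
  "objective M s t = - (\<Sum>i=1..M. xlogx (s i)) + (\<Sum>i=1..M. xlogx (t i))"

definition gval :: "nat \<Rightarrow> real \<Rightarrow> real" where
  "gval M \<alpha> = ln (real M - of_int \<lceil>1/\<alpha>\<rceil>)
     + \<alpha> * of_int \<lfloor>1/\<alpha>\<rfloor> * ln \<alpha>
     + xlogx (1 - \<alpha> * of_int \<lfloor>1/\<alpha>\<rfloor>)"

end

theory Submission
  imports Defs
begin

text \<open>
  The two terms can be bounded independently.

  Entropy term: \<open>-\<Sum> s log s \<le> log |supp s|\<close> (Jensen), and since \<open>t i \<le> \<alpha>\<close> forces
  \<open>|supp t| \<ge> \<lceil>1/\<alpha>\<rceil>\<close>, disjointness gives \<open>|supp s| \<le> M - \<lceil>1/\<alpha>\<rceil>\<close>.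

  Negative-entropy term: \<open>\<Sum> t log t\<close> is a separable convex function on the capped simplex
  \<open>{0 \<le> t i \<le> \<alpha>, \<Sum> t = 1}\<close>; we show for an arbitrary convex \<open>\<phi>\<close> with \<open>\<phi> 0 = 0\<close> that its
  maximum is \<open>n \<phi>(\<alpha>) + \<phi>(1 - n \<alpha>)\<close> with \<open>n = \<lfloor>1/\<alpha>\<rfloor>\<close>, by bounding \<open>\<phi>\<close> with two chords and
  a counting argument on the entries above \<open>1 - n \<alpha>\<close>.

  Both bounds are attained simultaneously by an explicit pair (\<open>opt_s\<close>, \<open>opt_t\<close>), which is
  feasible because \<open>2 \<lceil>1/\<alpha>\<rceil> \<le> M\<close>.
\<close>

lemma xlogx_0 [simp]: "xlogx 0 = 0"
  by (simp add: xlogx_def)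

text \<open>\<open>x log x\<close> (with \<open>0 log 0 = 0\<close>) is convex on \<open>[0, \<infinity>)\<close>: on \<open>(0, \<infinity>)\<close> its second
  derivative is \<open>1/x > 0\<close>, and at the endpoint \<open>0\<close> convexity reduces to \<open>ln (u y) \<le> ln y\<close>.\<close>

lemma xlogx_convex: "convex_on {0..} xlogx"
proof -
  have pos: "convex_on {0<..} (\<lambda>x::real. x * ln x)"
    by (rule f''_ge0_imp_convex[where f' = "\<lambda>x. ln x + 1" and f'' = "\<lambda>x. 1 / x"])
       (auto intro!: derivative_eq_intros)
  show ?thesis
  proof (rule convex_on_linorderI)
    fix u x y :: real
    assume u: "0 < u" "u < 1" and xy: "x \<in> {0..}" "y \<in> {0..}" "x < y"
    show "xlogx ((1 - u) *\<^sub>R x + u *\<^sub>R y) \<le> (1 - u) * xlogx x + u * xlogx y"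
    proof (cases "x = 0")
      case True
      have "ln (u * y) \<le> ln y" using u xy True by simp
      then have "u * y * ln (u * y) \<le> u * (y * ln y)"
        using u xy True by (simp add: mult_left_mono)
      then show ?thesis using True u xy by (simp add: xlogx_def)
    next
      case False
      then have "0 < x" "0 < y" "0 < (1 - u) * x + u * y" using xy u by (auto intro: add_pos_pos)
      then show ?thesis
        using convex_onD[OF pos, of u x y] u by (simp add: xlogx_def)
    qed
  qed simp
qed

lemma sum_over_positive_part:
  fixes f :: "'a \<Rightarrow> real" and g :: "'a \<Rightarrow> 'b::comm_monoid_add"
  assumes "finite A" "\<And>i. i \<in> A \<Longrightarrow> 0 \<le> f i" "\<And>i. i \<in> A \<Longrightarrow> f i = 0 \<Longrightarrow> g i = 0"
  shows "sum g {i\<in>A. 0 < f i} = sum g A"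
  using assms by (intro sum.mono_neutral_left) (auto simp: order_less_le)

text \<open>The entropy of a probability vector is at most the logarithm of the size of its
  support (Jensen's inequality for the concave \<open>ln\<close>, applied to the values \<open>1 / s i\<close>).\<close>

lemma entropy_le_ln_support:
  fixes s :: "'a \<Rightarrow> real"
  assumes "finite A" "\<And>i. i \<in> A \<Longrightarrow> 0 \<le> s i" "sum s A = 1"
    and "real (card {i\<in>A. 0 < s i}) \<le> K"
  shows "- (\<Sum>i\<in>A. xlogx (s i)) \<le> ln K"
proof -
  define P where "P = {i\<in>A. 0 < s i}"
  have fin: "finite P" using assms(1) by (simp add: P_def)
  have "sum s P = sum s A"
    unfolding P_def by (rule sum_over_positive_part[OF assms(1,2)])
  then have sum_P: "sum s P = 1" using assms(3) by simp
  then have "P \<noteq> {}" by auto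
  then have "0 < card P" using fin by (simp add: card_gt_0_iff)
  have "(\<Sum>i\<in>A. xlogx (s i)) = (\<Sum>i\<in>P. xlogx (s i))"
    unfolding P_def by (rule sum_over_positive_part[OF assms(1,2), symmetric]) auto
  also have "\<dots> = (\<Sum>i\<in>P. s i * ln (s i))"
    by (simp add: P_def xlogx_def)
  also have "\<dots> = - (\<Sum>i\<in>P. s i * ln (1 / s i))"
    by (simp add: ln_div P_def sum_negf)
  finally have "- (\<Sum>i\<in>A. xlogx (s i)) = (\<Sum>i\<in>P. s i * ln (1 / s i))" by simp
  also have "\<dots> \<le> ln (\<Sum>i\<in>P. s i *\<^sub>R (1 / s i))"
    using fin \<open>P \<noteq> {}\<close> sum_P
    by (intro concave_on_sum[OF _ _ ln_concave]) (auto simp: P_def)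
  also have "(\<Sum>i\<in>P. s i *\<^sub>R (1 / s i)) = real (card P)"
    by (simp add: P_def)
  also have "ln (real (card P)) \<le> ln K"
    using assms(4) \<open>0 < card P\<close> by (intro ln_mono) (simp_all add: P_def)
  finally show ?thesis .
qed

lemma card_support_ge:
  fixes t :: "'a \<Rightarrow> real"
  assumes "finite A" "\<And>i. i \<in> A \<Longrightarrow> 0 \<le> t i \<and> t i \<le> a" "sum t A = 1"
  shows "1 \<le> a * real (card {i\<in>A. 0 < t i})"
proof -
  have "sum t {i\<in>A. 0 < t i} = sum t A"
    using assms(2) by (intro sum_over_positive_part[OF assms(1)]) auto
  then have "1 = sum t {i\<in>A. 0 < t i}" using assms(3) by simp
  also have "\<dots> \<le> (\<Sum>i\<in>{i\<in>A. 0 < t i}. a)"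
    using assms(2) by (intro sum_mono) auto
  also have "\<dots> = a * real (card {i\<in>A. 0 < t i})" by simp
  finally show ?thesis .
qed

text \<open>With \<open>k\<close>
  entries above \<open>r\<close>, the excess is at most \<open>k (a - r)\<close> and at most \<open>1 - k r\<close>; the first
  bound settles \<open>k \<le> n\<close>, the second \<open>k > n\<close>.\<close>

lemma excess_sum_le:
  fixes t :: "'a \<Rightarrow> real"
  assumes "finite A" "\<And>i. i \<in> A \<Longrightarrow> 0 \<le> t i \<and> t i \<le> a" "sum t A = 1"
    and "0 \<le> r" "r \<le> a" "r = 1 - real n * a"
  shows "(\<Sum>i\<in>A. max (t i - r) 0) \<le> real n * (a - r)"
proof -
  define H where "H = {i\<in>A. r < t i}"
  define k where "k = card H"
  have "(\<Sum>i\<in>A. max (t i - r) 0) = (\<Sum>i\<in>A. if r < t i then t i - r else 0)"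
    by (intro sum.cong) auto
  also have "\<dots> = (\<Sum>i\<in>H. t i - r)"
    unfolding H_def using assms(1) by (rule sum.inter_filter[symmetric])
  finally have excess: "(\<Sum>i\<in>A. max (t i - r) 0) = (\<Sum>i\<in>H. t i - r)" .
  have by_count: "(\<Sum>i\<in>H. t i - r) \<le> real k * (a - r)"
    using assms(2) sum_bounded_above[of H "\<lambda>i. t i - r" "a - r"] by (force simp: H_def k_def)
  have "sum t H \<le> sum t A"
    using assms(1,2) by (intro sum_mono2) (auto simp: H_def)
  then have by_mass: "(\<Sum>i\<in>H. t i - r) \<le> 1 - real k * r"
    using assms(3) by (simp add: sum_subtractf k_def)
  show ?thesis
  proof (cases "k \<le> n")
    case True
    then have "real k * (a - r) \<le> real n * (a - r)"
      using assms(5) by (intro mult_right_mono) auto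
    then show ?thesis using excess by_count by linarith
  next
    case False
    then have "real n + 1 \<le> real k" by simp
    then have "(real n + 1) * r \<le> real k * r" using assms(4) by (rule mult_right_mono)
    moreover have "1 - (real n + 1) * r = real n * (a - r)"
      using assms(6) by (simp add: algebra_simps)
    ultimately show ?thesis using excess by_mass by linarith
  qed
qed

lemma convex_chord_slopes:
  fixes \<phi> :: "real \<Rightarrow> real"
  assumes conv: "convex_on {0..a} \<phi>" and "\<phi> 0 = 0" "0 < r" "r < a"
  shows "\<phi> r / r \<le> (\<phi> a - \<phi> r) / (a - r)"
proof -
  have "\<phi> r / r \<le> \<phi> a / a" "\<phi> a / a \<le> (\<phi> r - \<phi> a) / (r - a)"
    using convex_on_slope_le[OF conv, of 0 a r] assms by simp_all
  moreover have "(\<phi> r - \<phi> a) / (r - a) = (\<phi> a - \<phi> r) / (a - r)"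
    using assms(4) by (simp add: field_simps)
  ultimately show ?thesis by linarith
qed

lemma convex_le_two_chords:
  fixes \<phi> :: "real \<Rightarrow> real"
  assumes conv: "convex_on {0..a} \<phi>" and "\<phi> 0 = 0" "0 < r" "r < a" "x \<in> {0..a}"
  shows "\<phi> x \<le> \<phi> r / r * x + ((\<phi> a - \<phi> r) / (a - r) - \<phi> r / r) * max (x - r) 0"
proof (cases "x \<le> r")
  case True
  have "convex_on {0..r} \<phi>" by (rule convex_on_subset[OF conv]) (use assms(4) in auto)
  then have "\<phi> x \<le> (\<phi> r - \<phi> 0) / (r - 0) * (x - 0) + \<phi> 0"
    using True assms(5) by (intro convex_onD_Icc') auto
  then show ?thesis using True assms(2) by simp
next
  case False
  have "convex_on {r..a} \<phi>" by (rule convex_on_subset[OF conv]) (use assms(3) in auto)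
  then have "\<phi> x \<le> (\<phi> a - \<phi> r) / (a - r) * (x - r) + \<phi> r"
    using False assms(5) by (intro convex_onD_Icc') auto
  moreover have "\<phi> r / r * x - \<phi> r / r * (x - r) = \<phi> r" using assms(3) by (simp add: field_simps)
  ultimately show ?thesis using False by (simp add: algebra_simps)
qed

text \<open>Sum the two-chord bound;
  its linear part contributes its slope, and the hinge part is controlled by the
  counting step, with a nonnegative coefficient by the three-chord inequality.\<close>

lemma convex_sum_le_vertex:
  fixes \<phi> :: "real \<Rightarrow> real" and t :: "'a \<Rightarrow> real"
  assumes conv: "convex_on {0..a} \<phi>" and phi0: "\<phi> 0 = 0"
    and fin: "finite A" and bounds: "\<And>i. i \<in> A \<Longrightarrow> 0 \<le> t i \<and> t i \<le> a"
    and mass: "sum t A = 1"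
    and n_le: "real n * a \<le> 1" and n_gt: "1 < (real n + 1) * a"
  shows "(\<Sum>i\<in>A. \<phi> (t i)) \<le> real n * \<phi> a + \<phi> (1 - real n * a)"
proof -
  define r where "r = 1 - real n * a"
  have a0: "0 < a" using n_gt n_le by (simp add: algebra_simps)
  have r: "0 \<le> r" "r < a" using n_le n_gt by (simp_all add: r_def algebra_simps)
  show ?thesis
  proof (cases "r = 0")
    case True
    have "(\<Sum>i\<in>A. \<phi> (t i)) \<le> (\<Sum>i\<in>A. (\<phi> a - \<phi> 0) / (a - 0) * (t i - 0) + \<phi> 0)"
      using bounds by (intro sum_mono convex_onD_Icc'[OF conv]) auto
    also have "\<dots> = \<phi> a / a"
      using mass phi0 by (simp add: sum_divide_distrib[symmetric] sum_distrib_left[symmetric])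
    also have "\<dots> = real n * \<phi> a"
      using True a0 by (simp add: r_def field_simps)
    finally show ?thesis using True phi0 by (simp add: r_def)
  next
    case False
    then have r0: "0 < r" using r by simp
    define \<rho> where "\<rho> = \<phi> r / r"
    define \<sigma> where "\<sigma> = (\<phi> a - \<phi> r) / (a - r)"
    have "\<rho> \<le> \<sigma>"
      unfolding \<rho>_def \<sigma>_def by (rule convex_chord_slopes[OF conv phi0 r0 r(2)])
    have "(\<Sum>i\<in>A. \<phi> (t i)) \<le> (\<Sum>i\<in>A. \<rho> * t i + (\<sigma> - \<rho>) * max (t i - r) 0)"
      using bounds unfolding \<rho>_def \<sigma>_def
      by (intro sum_mono convex_le_two_chords[OF conv phi0 r0 r(2)]) auto
    also have "\<dots> = \<rho> + (\<sigma> - \<rho>) * (\<Sum>i\<in>A. max (t i - r) 0)"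
      using mass by (simp add: sum.distrib sum_distrib_left[symmetric])
    also have "\<dots> \<le> \<rho> + (\<sigma> - \<rho>) * (real n * (a - r))"
      using \<open>\<rho> \<le> \<sigma>\<close> excess_sum_le[OF fin bounds mass r(1) _ r_def] r
      by (intro add_left_mono mult_left_mono) auto
    also have "\<dots> = \<rho> * (1 - real n * (a - r)) + real n * (\<sigma> * (a - r))"
      by (simp add: algebra_simps)
    also have "\<dots> = \<rho> * (r * (1 + real n)) + real n * (\<phi> a - \<phi> r)"
    proof -
      have "1 - real n * (a - r) = r * (1 + real n)" by (simp add: r_def algebra_simps)
      moreover have "\<sigma> * (a - r) = \<phi> a - \<phi> r" using r(2) by (simp add: \<sigma>_def)
      ultimately show ?thesis by simp
    qed
    also have "\<dots> = real n * \<phi> a + \<phi> r"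
      using r0 by (simp add: \<rho>_def algebra_simps)
    finally show ?thesis by (simp add: r_def)
  qed
qed

lemma floor_ceiling_inverse:
  fixes \<alpha> :: real
  assumes "0 < \<alpha>"
  shows "real (nat \<lfloor>1/\<alpha>\<rfloor>) * \<alpha> \<le> 1"
    and "1 < (real (nat \<lfloor>1/\<alpha>\<rfloor>) + 1) * \<alpha>"
    and "1 \<le> real (nat \<lceil>1/\<alpha>\<rceil>) * \<alpha>"
    and "nat \<lceil>1/\<alpha>\<rceil> =
           (if real (nat \<lfloor>1/\<alpha>\<rfloor>) * \<alpha> = 1 then nat \<lfloor>1/\<alpha>\<rfloor> else Suc (nat \<lfloor>1/\<alpha>\<rfloor>))"
proof -
  have fl: "real (nat \<lfloor>1/\<alpha>\<rfloor>) = of_int \<lfloor>1/\<alpha>\<rfloor>" and ce: "real (nat \<lceil>1/\<alpha>\<rceil>) = of_int \<lceil>1/\<alpha>\<rceil>"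
    using assms by simp_all
  show "real (nat \<lfloor>1/\<alpha>\<rfloor>) * \<alpha> \<le> 1"
    unfolding fl using assms by (simp add: pos_le_divide_eq[symmetric])
  show "1 < (real (nat \<lfloor>1/\<alpha>\<rfloor>) + 1) * \<alpha>"
    unfolding fl using assms by (simp add: pos_divide_less_eq[symmetric])
  show "1 \<le> real (nat \<lceil>1/\<alpha>\<rceil>) * \<alpha>"
    unfolding ce using assms by (simp add: pos_divide_le_eq[symmetric])
  have "1/\<alpha> = of_int \<lfloor>1/\<alpha>\<rfloor> \<longleftrightarrow> real (nat \<lfloor>1/\<alpha>\<rfloor>) * \<alpha> = 1"
    using assms unfolding fl by (auto simp: field_simps)
  then show "nat \<lceil>1/\<alpha>\<rceil> =
           (if real (nat \<lfloor>1/\<alpha>\<rfloor>) * \<alpha> = 1 then nat \<lfloor>1/\<alpha>\<rfloor> else Suc (nat \<lfloor>1/\<alpha>\<rfloor>))"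
    using assms by (simp add: ceiling_altdef nat_add_distrib)
qed

lemma gval_alt:
  assumes "0 < \<alpha>"
  shows "gval M \<alpha> = ln (real M - real (nat \<lceil>1/\<alpha>\<rceil>))
           + real (nat \<lfloor>1/\<alpha>\<rfloor>) * xlogx \<alpha> + xlogx (1 - real (nat \<lfloor>1/\<alpha>\<rfloor>) * \<alpha>)"
  using assms by (simp add: gval_def xlogx_def algebra_simps)

lemma feasibleD:
  assumes "feasible M \<alpha> s t" "i \<in> {1..M}"
  shows "0 \<le> s i" "0 \<le> t i" "t i \<le> \<alpha>" "s i * t i = 0"
proof -
  have "0 \<le> s i \<and> 0 \<le> t i \<and> s i + t i \<le> \<alpha> \<and> s i * t i = 0"
    using assms by (simp add: feasible_def)
  then show "0 \<le> s i" "0 \<le> t i" "t i \<le> \<alpha>" "s i * t i = 0" by auto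
qed

text \<open>The two terms of
  the objective are bounded separately; the supports of \<open>s\<close> and \<open>t\<close> are disjoint, so
  \<open>s\<close> has at most \<open>M - \<lceil>1/\<alpha>\<rceil>\<close> nonzero entries.\<close>

lemma objective_le_gval:
  assumes feas: "feasible M \<alpha> s t" and "0 < \<alpha>"
  shows "objective M s t \<le> gval M \<alpha>"
proof -
  define A where "A = {1..M}"
  define n where "n = nat \<lfloor>1/\<alpha>\<rfloor>"
  define P where "P = {i\<in>A. 0 < s i}"
  define Q where "Q = {i\<in>A. 0 < t i}"
  have fin: "finite A" by (simp add: A_def)
  have s_nonneg: "\<And>i. i \<in> A \<Longrightarrow> 0 \<le> s i" and t_bounds: "\<And>i. i \<in> A \<Longrightarrow> 0 \<le> t i \<and> t i \<le> \<alpha>"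
    and disjoint: "\<And>i. i \<in> A \<Longrightarrow> s i * t i = 0"
    using feasibleD[OF feas] by (auto simp: A_def)
  have s_mass: "sum s A = 1" and t_mass: "sum t A = 1"
    using feas by (simp_all add: feasible_def A_def)
  have "1 \<le> \<alpha> * real (card Q)"
    unfolding Q_def by (rule card_support_ge[OF fin t_bounds t_mass])
  then have "\<lceil>1/\<alpha>\<rceil> \<le> int (card Q)"
    using assms(2) by (simp add: ceiling_le_iff pos_divide_le_eq mult.commute)
  moreover have "card P + card Q \<le> M"
  proof -
    have "P \<inter> Q = {}" using disjoint by (fastforce simp: P_def Q_def)
    then have "card P + card Q = card (P \<union> Q)"
      using fin by (simp add: P_def Q_def card_Un_disjoint)
    also have "\<dots> \<le> card A" using fin by (intro card_mono) (auto simp: P_def Q_def)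
    finally show ?thesis by (simp add: A_def)
  qed
  ultimately have "real (card P) \<le> real M - real (nat \<lceil>1/\<alpha>\<rceil>)"
    using assms(2) by simp
  then have s_part: "- (\<Sum>i\<in>A. xlogx (s i)) \<le> ln (real M - real (nat \<lceil>1/\<alpha>\<rceil>))"
    using entropy_le_ln_support[OF fin s_nonneg s_mass] by (simp add: P_def)
  have conv: "convex_on {0..\<alpha>} xlogx"
    by (rule convex_on_subset[OF xlogx_convex]) auto
  have t_part: "(\<Sum>i\<in>A. xlogx (t i)) \<le> real n * xlogx \<alpha> + xlogx (1 - real n * \<alpha>)"
    using convex_sum_le_vertex[OF conv xlogx_0 fin t_bounds t_mass floor_ceiling_inverse(1,2)[OF assms(2)]]
    by (simp add: n_def)
  show ?thesis
    using s_part t_part gval_alt[OF assms(2), of M] by (simp add: objective_def A_def n_def)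
qed

definition block :: "nat \<Rightarrow> nat \<Rightarrow> real \<Rightarrow> nat \<Rightarrow> real" where
  "block j k c i = (if j < i \<and> i \<le> k then c else 0)"

lemma sum_block:
  assumes "k \<le> M"
  shows "(\<Sum>i=1..M. block j k c i) = real (k - j) * c"
proof -
  have "(\<Sum>i=1..M. block j k c i) = (\<Sum>i\<in>{i\<in>{1..M}. j < i \<and> i \<le> k}. c)"
    unfolding block_def by (rule sum.inter_filter[symmetric]) simp
  also have "{i\<in>{1..M}. j < i \<and> i \<le> k} = {j<..k}"
    using assms by auto
  finally show ?thesis by simp
qed

definition opt_s :: "nat \<Rightarrow> real \<Rightarrow> nat \<Rightarrow> real" where
  "opt_s M \<alpha> = block (nat \<lceil>1/\<alpha>\<rceil>) M (1 / (real M - real (nat \<lceil>1/\<alpha>\<rceil>)))"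

definition opt_t :: "real \<Rightarrow> nat \<Rightarrow> real" where
  "opt_t \<alpha> i = block 0 (nat \<lfloor>1/\<alpha>\<rfloor>) \<alpha> i
      + block (nat \<lfloor>1/\<alpha>\<rfloor>) (Suc (nat \<lfloor>1/\<alpha>\<rfloor>)) (1 - real (nat \<lfloor>1/\<alpha>\<rfloor>) * \<alpha>) i"

lemma opt_parameters:
  assumes "0 < \<alpha>" "2 * \<lceil>1/\<alpha>\<rceil> \<le> int M"
  defines "n \<equiv> nat \<lfloor>1/\<alpha>\<rfloor>" and "m \<equiv> nat \<lceil>1/\<alpha>\<rceil>"
  shows "0 \<le> 1 - real n * \<alpha>" "1 - real n * \<alpha> < \<alpha>"
    and "(m = n \<and> 1 - real n * \<alpha> = 0) \<or> m = Suc n"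
    and "Suc n \<le> M" "m < M" "1 / (real M - real m) \<le> \<alpha>"
proof -
  note fc = floor_ceiling_inverse[OF assms(1), folded n_def m_def]
  show "0 \<le> 1 - real n * \<alpha>" "1 - real n * \<alpha> < \<alpha>" using fc(1,2) by (simp_all add: algebra_simps)
  show m_cases: "(m = n \<and> 1 - real n * \<alpha> = 0) \<or> m = Suc n" using fc(4) by auto
  have "1 \<le> m" using fc(3) by (cases m) auto
  moreover have "2 * m \<le> M" using assms(2) by (simp add: m_def)
  ultimately show "Suc n \<le> M" "m < M" using m_cases by auto
  have "real m \<le> real M - real m" using \<open>2 * m \<le> M\<close> by simp
  then have "real m * \<alpha> \<le> (real M - real m) * \<alpha>"
    using assms(1) by (intro mult_right_mono) auto
  then have "1 \<le> (real M - real m) * \<alpha>" using fc(3) by linarith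
  then show "1 / (real M - real m) \<le> \<alpha>"
    using \<open>m < M\<close> by (simp add: divide_le_eq mult.commute)
qed

lemma opt_feasible:
  assumes "0 < \<alpha>" "2 * \<lceil>1/\<alpha>\<rceil> \<le> int M"
  shows "feasible M \<alpha> (opt_s M \<alpha>) (opt_t \<alpha>)"
proof -
  define n where "n = nat \<lfloor>1/\<alpha>\<rfloor>"
  define m where "m = nat \<lceil>1/\<alpha>\<rceil>"
  define r where "r = 1 - real n * \<alpha>"
  define K where "K = real M - real m"
  note par = opt_parameters[OF assms, folded n_def m_def, folded r_def K_def]
  have s_eq: "opt_s M \<alpha> = block m M (1 / K)"
    by (simp add: opt_s_def m_def K_def)
  have t_eq: "opt_t \<alpha> i = block 0 n \<alpha> i + block n (Suc n) r i" for i
    by (simp add: opt_t_def n_def r_def)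
  have t_vanishes: "opt_t \<alpha> i = 0" if "m < i" for i
    using that par(3) by (auto simp: t_eq block_def)
  have "(\<Sum>i=1..M. opt_s M \<alpha> i) = real (M - m) * (1 / K)"
    unfolding s_eq by (rule sum_block) simp
  moreover have "(\<Sum>i=1..M. opt_t \<alpha> i) = real (n - 0) * \<alpha> + real (Suc n - n) * r"
    unfolding t_eq sum.distrib using par(4) by (simp only: sum_block)
  moreover have "0 \<le> opt_s M \<alpha> i" "0 \<le> opt_t \<alpha> i"
    and "opt_s M \<alpha> i + opt_t \<alpha> i \<le> \<alpha>" "opt_s M \<alpha> i * opt_t \<alpha> i = 0" for i
    using t_vanishes[of i] par(1,2,5,6) assms(1)
    by (auto simp: s_eq t_eq block_def K_def)
  ultimately show ?thesis
    using par(5) by (simp add: feasible_def K_def of_nat_diff r_def)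
qed

lemma opt_objective:
  assumes "0 < \<alpha>" "2 * \<lceil>1/\<alpha>\<rceil> \<le> int M"
  shows "objective M (opt_s M \<alpha>) (opt_t \<alpha>) = gval M \<alpha>"
proof -
  define n where "n = nat \<lfloor>1/\<alpha>\<rfloor>"
  define m where "m = nat \<lceil>1/\<alpha>\<rceil>"
  define r where "r = 1 - real n * \<alpha>"
  define K where "K = real M - real m"
  note par = opt_parameters[OF assms, folded n_def m_def, folded r_def K_def]
  have "(\<Sum>i=1..M. xlogx (opt_s M \<alpha> i)) = (\<Sum>i=1..M. block m M (xlogx (1 / K)) i)"
    by (intro sum.cong) (auto simp: opt_s_def m_def K_def block_def)
  also have "\<dots> = real (M - m) * xlogx (1 / K)"
    by (rule sum_block) simp
  also have "\<dots> = - ln K"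
    using par(5) by (simp add: K_def of_nat_diff xlogx_def ln_div)
  finally have s_val: "(\<Sum>i=1..M. xlogx (opt_s M \<alpha> i)) = - ln K" .
  have "(\<Sum>i=1..M. xlogx (opt_t \<alpha> i))
          = (\<Sum>i=1..M. block 0 n (xlogx \<alpha>) i + block n (Suc n) (xlogx r) i)"
    by (intro sum.cong) (auto simp: opt_t_def n_def r_def block_def)
  also have "\<dots> = real (n - 0) * xlogx \<alpha> + real (Suc n - n) * xlogx r"
    unfolding sum.distrib using par(4) by (simp only: sum_block)
  finally have t_val: "(\<Sum>i=1..M. xlogx (opt_t \<alpha> i)) = real n * xlogx \<alpha> + xlogx r" by simp
  show ?thesis
    using s_val t_val gval_alt[OF assms(1), of M]
    by (simp add: objective_def K_def m_def n_def r_def)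
qed

theorem lemma1:
  fixes M :: nat and \<alpha> :: real
  assumes "M \<ge> 2" and "0 < \<alpha>" and "\<alpha> \<le> 1"
    and "2 * \<lceil>1/\<alpha>\<rceil> \<le> int M"
  shows "(\<exists>s t. feasible M \<alpha> s t \<and> objective M s t = gval M \<alpha>) \<and>
         (\<forall>s t. feasible M \<alpha> s t \<longrightarrow> objective M s t \<le> gval M \<alpha>)"
proof
  show "\<exists>s t. feasible M \<alpha> s t \<and> objective M s t = gval M \<alpha>"
    using opt_feasible[OF assms(2,4)] opt_objective[OF assms(2,4)] by blast
  show "\<forall>s t. feasible M \<alpha> s t \<longrightarrow> objective M s t \<le> gval M \<alpha>"
    using objective_le_gval[OF _ assms(2)] by blast
qed

end
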